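(* Consider the opinion--action model described in the context with $\phi\in(0,1)$ and arbitrary initial values $x_i(0),y_i(0)\in[0,1]$. Suppose there exists a finite time $T>0$ such that $\Theta(T)\neq\emptyset$ and for all integers $t\ge T$, $\Omega(t)=\Omega:=\Omega(T)$ and $\Theta(t)=\Theta:=\Theta(T)$. Then $z_i(t)=z_i(T)$ for all $i\in\Theta$ and all $t\ge T$, and $\lim_{t\to\infty}\mathrm{dist}\big(z_j(t),\operatorname{conv}\{z_i(T)\mid i\in\Theta\}\big)=0$ for all $j\in\Omega$.
   Context: Fix an integer $n\ge 1$, agent set $\mathcal{V}=\{1,\dots,n\}$, a confidence threshold $\epsilon\in[0,1]$ and a decision weight $\phi\in[0,1]$. Each agent $i$ has opinion $x_i(t)\in[0,1]$ and action $y_i(t)\in[0,1]$. For $t\in\mathbb{Z}_{\ge0}$ the model evolves by: $\mathcal{N}_i(t)=\{j\in\mathcal{V}\mid j\neq i,\ |x_i(t)-y_j(t)|\le\epsilon\}$; $x_i(t+1)=\frac{x_i(t)+\sum_{j\in\mathcal{N}_i(t)}y_j(t)}{|\mathcal{N}_i(t)|+1}$; $y_i(t+1)=\phi\,x_i(t+1)+(1-\phi)\,y_{\mathrm{avg}}(t)$ with $y_{\mathrm{avg}}(t)=\frac1n\sum_{k=1}^n y_k(t)$. For $t\ge1$ the augmented state is $\mathbf{z}(t)\in\mathbb{R}^{2n}$ with $z_i(t)=x_i(t)$ and $z_{n+i}(t)=y_i(t-1)$ for $i\in\mathcal{V}$ (indices $1,\dots,n$ are "opinion nodes", $n+1,\dots,2n$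 "action nodes"). For $t\ge1$ define $\Theta(t)=\{i\in\{1,\dots,n\}\mid |\mathcal{N}_i(t)|=0\}$ and $\Omega(t)=\{n+1,\dots,2n\}\cup\{i\in\{1,\dots,n\}\mid |\mathcal{N}_i(t)|>0\}$. $\operatorname{conv}$ denotes convex hull and $\mathrm{dist}(x,S)=\inf_{y\in S}|x-y|$. *)

theory Defs
  imports "HOL-Analysis.Analysis"
begin

text \<open>Opinion--action model. Agents are 1..n; opinions x and actions y are
functions nat => real (values outside 1..n are irrelevant).\<close>

definition nbrs :: "nat \<Rightarrow> real \<Rightarrow> (nat \<Rightarrow> real) \<Rightarrow> (nat \<Rightarrow> real) \<Rightarrow> nat \<Rightarrow> nat set" where
  "nbrs n eps x y i = {j \<in> {1..n}. j \<noteq> i \<and> \<bar>x i - y j\<bar> \<le> eps}"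

definition step :: "nat \<Rightarrow> real \<Rightarrow> real \<Rightarrow> (nat \<Rightarrow> real) \<times> (nat \<Rightarrow> real) \<Rightarrow> (nat \<Rightarrow> real) \<times> (nat \<Rightarrow> real)" where
  "step n eps phi s =
     (let x = fst s; y = snd s;
          x' = (\<lambda>i. (x i + (\<Sum>j\<in>nbrs n eps x y i. y j)) / (real (card (nbrs n eps x y i)) + 1));
          yavg = (\<Sum>k\<in>{1..n}. y k) / real n
      in (x', \<lambda>i. phi * x' i + (1 - phi) * yavg))"

fun state :: "nat \<Rightarrow> real \<Rightarrow> real \<Rightarrow> (nat \<Rightarrow> real) \<Rightarrow> (nat \<Rightarrow> real) \<Rightarrow> nat \<Rightarrow> (nat \<Rightarrow> real) \<times> (nat \<Rightarrow> real)" where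
  "state n eps phi x0 y0 0 = (x0, y0)"
| "state n eps phi x0 y0 (Suc t) = step n eps phi (state n eps phi x0 y0 t)"

abbreviation xs where "xs n eps phi x0 y0 t \<equiv> fst (state n eps phi x0 y0 t)"
abbreviation ys where "ys n eps phi x0 y0 t \<equiv> snd (state n eps phi x0 y0 t)"

text \<open>Augmented state, for t >= 1: z_i(t) = x_i(t), z_{n+i}(t) = y_i(t-1).\<close>
definition zst :: "nat \<Rightarrow> real \<Rightarrow> real \<Rightarrow> (nat \<Rightarrow> real) \<Rightarrow> (nat \<Rightarrow> real) \<Rightarrow> nat \<Rightarrow> nat \<Rightarrow> real" where
  "zst n eps phi x0 y0 t k =
     (if k \<le> n then xs n eps phi x0 y0 t k else ys n eps phi x0 y0 (t - 1) (k - n))"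

definition Theta :: "nat \<Rightarrow> real \<Rightarrow> real \<Rightarrow> (nat \<Rightarrow> real) \<Rightarrow> (nat \<Rightarrow> real) \<Rightarrow> nat \<Rightarrow> nat set" where
  "Theta n eps phi x0 y0 t =
     {i \<in> {1..n}. card (nbrs n eps (xs n eps phi x0 y0 t) (ys n eps phi x0 y0 t) i) = 0}"

definition Omega :: "nat \<Rightarrow> real \<Rightarrow> real \<Rightarrow> (nat \<Rightarrow> real) \<Rightarrow> (nat \<Rightarrow> real) \<Rightarrow> nat \<Rightarrow> nat set" where
  "Omega n eps phi x0 y0 t =
     {n+1..2*n} \<union> {i \<in> {1..n}. card (nbrs n eps (xs n eps phi x0 y0 t) (ys n eps phi x0 y0 t) i) > 0}"

end

theory Submission
  imports Defs
begin

text \<open>Once the isolated agents \<Theta> stop moving, let M be the largest of their frozen opinions.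
The excess of all opinions and actions over M never grows, and it shrinks by the factor
1 - \<phi>(1 - \<phi>)/(2n) every three steps: an isolated agent pulls its action down towards M,
this lowers the mean action, which lowers every action, which finally lowers every
non-isolated opinion, since such an opinion is an average of its own value and at least one
action. Applying the same argument to the negated system bounds all values from below by the
smallest frozen opinion, so everything converges to the interval spanned by the frozen opinions,
which lies in their convex hull.\<close>

lemma sum_le_card_mult_minus:
  fixes f :: "'a \<Rightarrow> real"
  assumes "finite A" "i \<in> A" "\<forall>j\<in>A. f j \<le> c" "f i \<le> c'"
  shows "sum f A \<le> real (card A) * c - (c - c')"
proof -
  have "sum f A = f i + sum f (A - {i})"
    using assms(1,2) by (simp add: sum.remove)
  also have "sum f (A - {i}) \<le> real (card (A - {i})) * c"
    using sum_bounded_above[of "A - {i}" f c] assms(3) by auto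
  also have "real (card (A - {i})) = real (card A) - 1"
    using assms(1,2) card_gt_0_iff[of A] by (auto simp: of_nat_diff Suc_leI)
  finally show ?thesis
    using assms(4) by (simp add: algebra_simps)
qed

lemma self_weighted_average_le:
  fixes f :: "'a \<Rightarrow> real"
  assumes "finite S" "S \<noteq> {}" "a \<le> P" "\<forall>j\<in>S. f j \<le> Q" "Q \<le> P"
  shows "(a + sum f S) / (real (card S) + 1) \<le> (P + Q) / 2"
proof -
  define c where "c = real (card S)"
  have c: "1 \<le> c"
    using assms(1,2) unfolding c_def by (simp add: Suc_leI card_gt_0_iff)
  have "a + sum f S \<le> P + c * Q"
    using assms(3) sum_bounded_above[of S f Q] assms(4) unfolding c_def by auto
  also have "\<dots> \<le> (P + Q) / 2 * (c + 1)"
    using mult_left_mono[OF assms(5), of "c - 1"] c by (simp add: algebra_simps)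
  finally show ?thesis
    unfolding c_def[symmetric] using c by (simp add: pos_divide_le_eq)
qed

lemma infdist_convex_le:
  fixes H :: "real set"
  assumes "m \<in> H" "M \<in> H" "convex H" "m - a \<le> v" "v \<le> M + b" "0 \<le> a" "0 \<le> b"
  shows "infdist v H \<le> a + b"
proof (cases "M < v \<or> v < m")
  case True
  then show ?thesis
    using infdist_le[OF assms(1), of v] infdist_le[OF assms(2), of v] assms(4-7)
    by (auto simp: dist_real_def)
next
  case False
  then have "v \<in> closed_segment m M"
    by (simp add: closed_segment_eq_real_ivl)
  then have "v \<in> H"
    using assms(1-3) convex_contains_segment by blast
  then show ?thesis
    using assms(6,7) by simp
qed

text \<open>The dynamics from time T on. The neighbour sets are kept abstract so that negating all
opinions and actions gives another instance of the locale.\<close>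

locale opinion_action_isolated =
  fixes n :: nat and phi :: real and T :: nat
    and x y :: "nat \<Rightarrow> nat \<Rightarrow> real" and N :: "nat \<Rightarrow> nat \<Rightarrow> nat set" and Th :: "nat set"
  assumes n_pos: "1 \<le> n" and phi_pos: "0 < phi" and phi_less_1: "phi < 1"
    and x_Suc: "x (Suc t) k = (x t k + (\<Sum>j\<in>N t k. y t j)) / (real (card (N t k)) + 1)"
    and y_Suc: "y (Suc t) k = phi * x (Suc t) k + (1 - phi) * ((\<Sum>j\<in>{1..n}. y t j) / real n)"
    and N_subset: "N t k \<subseteq> {1..n}"
    and Th_subset: "Th \<subseteq> {1..n}" and Th_nonempty: "Th \<noteq> {}"
    and N_isolated: "T \<le> t \<Longrightarrow> k \<in> Th \<Longrightarrow> N t k = {}"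
    and N_nonisolated: "T \<le> t \<Longrightarrow> k \<in> {1..n} \<Longrightarrow> k \<notin> Th \<Longrightarrow> N t k \<noteq> {}"
begin

lemma negated: "opinion_action_isolated n phi T (\<lambda>t k. - x t k) (\<lambda>t k. - y t k) N Th"
proof unfold_locales
  show "- x (Suc t) k = (- x t k + (\<Sum>j\<in>N t k. - y t j)) / (real (card (N t k)) + 1)" for t k
    unfolding x_Suc sum_negf by (simp add: add_divide_distrib diff_divide_distrib)
  show "- y (Suc t) k
      = phi * - x (Suc t) k + (1 - phi) * ((\<Sum>j\<in>{1..n}. - y t j) / real n)" for t k
    unfolding y_Suc sum_negf by simp
qed (use n_pos phi_pos phi_less_1 N_subset Th_subset Th_nonempty N_isolated N_nonisolated in auto)

lemma x_isolated_const:
  assumes "T \<le> t" "i \<in> Th"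
  shows "x t i = x T i"
  using assms(1)
proof (induction t rule: dec_induct)
  case (step t)
  then show ?case
    using x_Suc[of t i] N_isolated[OF step(1) assms(2)] by simp
qed simp

lemma mean_y_le:
  assumes "\<forall>j\<in>{1..n}. y t j \<le> M + q" "i \<in> {1..n}" "y t i \<le> M + q'"
  shows "(\<Sum>j\<in>{1..n}. y t j) / real n \<le> M + q - (q - q') / real n"
proof -
  have "(\<Sum>j\<in>{1..n}. y t j) \<le> real n * (M + q) - (q - q')"
    using sum_le_card_mult_minus[of "{1..n}" i "y t" "M + q" "M + q'"] assms by simp
  then show ?thesis
    using n_pos by (simp add: divide_simps algebra_simps)
qed

lemma y_Suc_le:
  assumes "x (Suc t) k \<le> M + a" "(\<Sum>j\<in>{1..n}. y t j) / real n \<le> M + b"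
  shows "y (Suc t) k \<le> M + (phi * a + (1 - phi) * b)"
proof -
  have "phi * x (Suc t) k \<le> phi * (M + a)"
    using assms(1) phi_pos by (simp add: mult_left_mono)
  moreover have "(1 - phi) * ((\<Sum>j\<in>{1..n}. y t j) / real n) \<le> (1 - phi) * (M + b)"
    using phi_less_1 by (intro mult_left_mono[OF assms(2)]) simp
  ultimately show ?thesis
    unfolding y_Suc by (simp add: algebra_simps)
qed

definition capped :: "real \<Rightarrow> nat \<Rightarrow> real \<Rightarrow> bool" where
  "capped M t p \<longleftrightarrow> (\<forall>k\<in>{1..n}. x t k \<le> M + p \<and> y t k \<le> M + p)"

definition gain :: real where
  "gain = phi * (1 - phi) / real n"

definition contraction :: real where
  "contraction = 1 - gain / 2"

lemma gain_bounds: "0 < gain" "gain \<le> 1"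
proof -
  have "0 < phi * (1 - phi)" "phi * (1 - phi) \<le> 1"
    using phi_pos phi_less_1 by (simp_all add: mult_le_one)
  then show "0 < gain" "gain \<le> 1"
    unfolding gain_def using n_pos by (simp_all add: field_simps)
qed

lemma contraction_bounds: "0 < contraction" "contraction < 1"
  using gain_bounds unfolding contraction_def by simp_all

context
  fixes M :: real
  assumes isolated_le: "\<forall>i\<in>Th. x T i \<le> M"
begin

lemma x_isolated_le:
  assumes "T \<le> t" "i \<in> Th"
  shows "x t i \<le> M"
  using x_isolated_const[OF assms] isolated_le assms(2) by simp

lemma x_Suc_le:
  assumes "T \<le> t" "k \<in> {1..n}" "x t k \<le> M + p" "\<forall>j\<in>{1..n}. y t j \<le> M + q"
    and "0 \<le> q" "q \<le> p"
  shows "x (Suc t) k \<le> M + (p + q) / 2"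
proof (cases "k \<in> Th")
  case True
  then have "x (Suc t) k \<le> M"
    using x_isolated_le assms(1) by simp
  then show ?thesis
    using assms(5,6) by (simp add: field_simps)
next
  case False
  have "finite (N t k)"
    using N_subset finite_subset by blast
  then have "x (Suc t) k \<le> (M + p + (M + q)) / 2"
    unfolding x_Suc using N_nonisolated[OF assms(1,2) False] N_subset assms(3-6)
    by (intro self_weighted_average_le) auto
  then show ?thesis
    by (simp add: field_simps)
qed

lemma capped_Suc:
  assumes "T \<le> t" "0 \<le> p" "capped M t p"
  shows "capped M (Suc t) p"
  unfolding capped_def
proof
  fix k assume k: "k \<in> {1..n}"
  have x': "x (Suc t) k \<le> M + p"
    using x_Suc_le[OF assms(1) k, of p p] assms k unfolding capped_def by simp
  have "(\<Sum>j\<in>{1..n}. y t j) / real n \<le> M + p"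
    using mean_y_le[of t M p 1 p] assms(3) n_pos unfolding capped_def by simp
  then have "y (Suc t) k \<le> M + (phi * p + (1 - phi) * p)"
    by (rule y_Suc_le[OF x'])
  then show "x (Suc t) k \<le> M + p \<and> y (Suc t) k \<le> M + p"
    using x' by (simp add: algebra_simps)
qed

lemma capped_mono:
  assumes "T \<le> s" "s \<le> t" "0 \<le> p" "capped M s p"
  shows "capped M t p"
  using assms(2)
proof (induction t rule: dec_induct)
  case (step t)
  then show ?case
    using capped_Suc assms(1,3) by simp
qed (use assms(4) in simp)

lemma y_two_steps_le:
  assumes "T \<le> t" "0 \<le> p" "capped M t p"
  shows "\<forall>k\<in>{1..n}. y (Suc (Suc t)) k \<le> M + (1 - gain) * p"
proof
  fix k assume k: "k \<in> {1..n}"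
  obtain i where i: "i \<in> Th" "i \<in> {1..n}"
    using Th_nonempty Th_subset by blast
  have capped1: "capped M (Suc t) p" and capped2: "capped M (Suc (Suc t)) p"
    using capped_Suc assms by simp_all
  have "y (Suc t) i \<le> M + (phi * 0 + (1 - phi) * p)"
    using x_isolated_le[of "Suc t" i] assms i mean_y_le[of t M p 1 p] n_pos
    unfolding capped_def by (intro y_Suc_le) simp_all
  then have "(\<Sum>j\<in>{1..n}. y (Suc t) j) / real n \<le> M + p - (p - (1 - phi) * p) / real n"
    using capped1 i(2) unfolding capped_def by (intro mean_y_le) simp_all
  also have "\<dots> = M + (p - phi * p / real n)"
    by (simp add: algebra_simps)
  finally have "y (Suc (Suc t)) k \<le> M + (phi * p + (1 - phi) * (p - phi * p / real n))"
    using capped2 k unfolding capped_def by (intro y_Suc_le) simp_all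
  also have "phi * p + (1 - phi) * (p - phi * p / real n) = (1 - gain) * p"
    unfolding gain_def using n_pos by (simp add: field_simps)
  finally show "y (Suc (Suc t)) k \<le> M + (1 - gain) * p" .
qed

lemma capped_contract:
  assumes "T \<le> t" "0 \<le> p" "capped M t p"
  shows "capped M (t + 3) (contraction * p)"
proof -
  have gain_p: "0 \<le> (1 - gain) * p" "(1 - gain) * p \<le> contraction * p"
    using gain_bounds assms(2) unfolding contraction_def by (simp_all add: mult_right_mono)
  have capped2: "capped M (Suc (Suc t)) p"
    using capped_Suc assms by simp
  have y2: "\<forall>k\<in>{1..n}. y (Suc (Suc t)) k \<le> M + (1 - gain) * p"
    using y_two_steps_le[OF assms] .
  then have mean2: "(\<Sum>j\<in>{1..n}. y (Suc (Suc t)) j) / real n \<le> M + (1 - gain) * p"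
    using mean_y_le[OF y2, of 1 "(1 - gain) * p"] n_pos by simp
  have x3: "x (t + 3) k \<le> M + contraction * p" if "k \<in> {1..n}" for k
    using x_Suc_le[of "Suc (Suc t)" k p "(1 - gain) * p"] assms(1) that capped2 y2 gain_p
    unfolding capped_def contraction_def by (simp add: numeral_3_eq_3 field_simps)
  have "y (t + 3) k \<le> M + contraction * p" if "k \<in> {1..n}" for k
  proof -
    have "y (t + 3) k \<le> M + (phi * (contraction * p) + (1 - phi) * ((1 - gain) * p))"
      using y_Suc_le[OF _ mean2] x3[OF that] by (simp add: numeral_3_eq_3)
    also have "\<dots> \<le> M + (phi * (contraction * p) + (1 - phi) * (contraction * p))"
      using gain_p(2) phi_less_1 by (simp add: mult_left_mono)
    finally show ?thesis
      by (simp add: algebra_simps)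
  qed
  then show ?thesis
    using x3 unfolding capped_def by simp
qed

lemma capped_tendsto: "\<exists>B. B \<longlonglongrightarrow> 0 \<and> (\<forall>t. 0 \<le> B t) \<and> (\<forall>t\<ge>T. capped M t (B t))"
proof -
  define p where "p = (\<Sum>k\<in>{1..n}. \<bar>x T k - M\<bar> + \<bar>y T k - M\<bar>)"
  have p: "0 \<le> p"
    unfolding p_def by (intro sum_nonneg) simp
  have capped_T: "capped M T p"
    unfolding capped_def
  proof
    fix k assume "k \<in> {1..n}"
    then have "\<bar>x T k - M\<bar> + \<bar>y T k - M\<bar> \<le> p"
      unfolding p_def by (intro member_le_sum) simp_all
    then show "x T k \<le> M + p \<and> y T k \<le> M + p"
      by linarith
  qed
  have steps: "capped M (T + 3 * m) (contraction ^ m * p)" for m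
  proof (induction m)
    case (Suc m)
    have "capped M (T + 3 * m + 3) (contraction * (contraction ^ m * p))"
      using capped_contract[OF _ _ Suc] contraction_bounds p by simp
    moreover have "T + 3 * Suc m = T + 3 * m + 3"
      by simp
    ultimately show ?case
      by (simp only: power_Suc mult.assoc)
  qed (use capped_T in simp)
  define B where "B t = contraction ^ ((t - T) div 3) * p" for t
  have "capped M t (B t)" if "T \<le> t" for t
    using capped_mono[OF _ _ _ steps] contraction_bounds p that unfolding B_def by simp
  moreover have "filterlim (\<lambda>t. (t - T) div 3) sequentially sequentially"
    unfolding filterlim_at_top
  proof
    fix a
    show "eventually (\<lambda>t. a \<le> (t - T) div 3) sequentially"
      using eventually_ge_at_top[of "T + 3 * a"] by eventually_elim auto
  qed
  then have "B \<longlonglongrightarrow> 0"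
    unfolding B_def using contraction_bounds
    by (intro tendsto_mult_left_zero filterlim_compose[OF LIMSEQ_power_zero]) simp_all
  moreover have "0 \<le> B t" for t
    unfolding B_def using contraction_bounds p by simp
  ultimately show ?thesis
    by blast
qed

end

lemma infdist_convex_hull_tendsto:
  assumes "k \<in> {1..n}"
  shows "(\<lambda>t. infdist (x t k) (convex hull (x T ` Th))) \<longlonglongrightarrow> 0"
    and "(\<lambda>t. infdist (y t k) (convex hull (x T ` Th))) \<longlonglongrightarrow> 0"
proof -
  define H where "H = convex hull (x T ` Th)"
  define M where "M = Max (x T ` Th)"
  define m where "m = Min (x T ` Th)"
  have fin: "finite Th"
    using Th_subset finite_subset by blast
  have mM: "m \<in> H" "M \<in> H"
    unfolding H_def m_def M_def using fin Th_nonempty by (auto intro!: hull_inc Min_in Max_in)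
  have convex_H: "convex H"
    unfolding H_def by simp
  obtain B1 where B1: "B1 \<longlonglongrightarrow> 0" "\<forall>t. 0 \<le> B1 t" "\<forall>t\<ge>T. capped M t (B1 t)"
    using capped_tendsto[of M] fin unfolding M_def by auto
  interpret neg: opinion_action_isolated n phi T "\<lambda>t k. - x t k" "\<lambda>t k. - y t k" N Th
    by (rule negated)
  obtain B2 where B2: "B2 \<longlonglongrightarrow> 0" "\<forall>t. 0 \<le> B2 t" "\<forall>t\<ge>T. neg.capped (- m) t (B2 t)"
    using neg.capped_tendsto[of "- m"] fin unfolding m_def by auto
  have bound: "infdist (x t k) H \<le> B2 t + B1 t \<and> infdist (y t k) H \<le> B2 t + B1 t"
    if "T \<le> t" for t
  proof -
    have "capped M t (B1 t)" "neg.capped (- m) t (B2 t)"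
      using B1(3) B2(3) that by simp_all
    then have "x t k \<le> M + B1 t \<and> y t k \<le> M + B1 t" "- x t k \<le> - m + B2 t \<and> - y t k \<le> - m + B2 t"
      using assms unfolding capped_def neg.capped_def by blast+
    then have "m - B2 t \<le> x t k" "x t k \<le> M + B1 t" "m - B2 t \<le> y t k" "y t k \<le> M + B1 t"
      by auto
    then show ?thesis
      using infdist_convex_le[OF mM convex_H] B1(2) B2(2) by simp
  qed
  have ev: "eventually (\<lambda>t. norm (infdist (x t k) H) \<le> B2 t + B1 t
      \<and> norm (infdist (y t k) H) \<le> B2 t + B1 t) sequentially"
    using eventually_ge_at_top[of T] by eventually_elim (simp add: bound infdist_nonneg)
  have E: "(\<lambda>t. B2 t + B1 t) \<longlonglongrightarrow> 0"
    using tendsto_add[OF B2(1) B1(1)] by simp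
  show "(\<lambda>t. infdist (x t k) H) \<longlonglongrightarrow> 0"
    by (rule Lim_null_comparison[OF eventually_mono[OF ev] E]) blast
  show "(\<lambda>t. infdist (y t k) H) \<longlonglongrightarrow> 0"
    by (rule Lim_null_comparison[OF eventually_mono[OF ev] E]) blast
qed

end

lemma Theta_iff:
  "k \<in> Theta n eps phi x0 y0 t
    \<longleftrightarrow> k \<in> {1..n} \<and> nbrs n eps (xs n eps phi x0 y0 t) (ys n eps phi x0 y0 t) k = {}"
proof -
  have "finite (nbrs n eps a b k)" for a b
    unfolding nbrs_def by simp
  then show ?thesis
    unfolding Theta_def by simp
qed

lemma opinion_action_isolated_model:
  assumes "1 \<le> n" "0 < phi" "phi < 1" "Theta n eps phi x0 y0 T \<noteq> {}"
    and "\<forall>t\<ge>T. Theta n eps phi x0 y0 t = Theta n eps phi x0 y0 T"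
  shows "opinion_action_isolated n phi T (xs n eps phi x0 y0) (ys n eps phi x0 y0)
    (\<lambda>t. nbrs n eps (xs n eps phi x0 y0 t) (ys n eps phi x0 y0 t)) (Theta n eps phi x0 y0 T)"
proof unfold_locales
  show "xs n eps phi x0 y0 (Suc t) k
      = (xs n eps phi x0 y0 t k + (\<Sum>j\<in>nbrs n eps (xs n eps phi x0 y0 t) (ys n eps phi x0 y0 t) k.
          ys n eps phi x0 y0 t j))
        / (real (card (nbrs n eps (xs n eps phi x0 y0 t) (ys n eps phi x0 y0 t) k)) + 1)"
    "ys n eps phi x0 y0 (Suc t) k
      = phi * xs n eps phi x0 y0 (Suc t) k
        + (1 - phi) * ((\<Sum>j\<in>{1..n}. ys n eps phi x0 y0 t j) / real n)" for t k
    by (simp_all add: step_def Let_def)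
  show "nbrs n eps (xs n eps phi x0 y0 t) (ys n eps phi x0 y0 t) k \<subseteq> {1..n}" for t k
    unfolding nbrs_def by blast
  show "Theta n eps phi x0 y0 T \<subseteq> {1..n}" "Theta n eps phi x0 y0 T \<noteq> {}"
    using assms(4) Theta_iff by blast+
  have Theta_eq: "Theta n eps phi x0 y0 t = Theta n eps phi x0 y0 T" if "T \<le> t" for t
    using assms(5) that by blast
  show "nbrs n eps (xs n eps phi x0 y0 t) (ys n eps phi x0 y0 t) k = {}"
    if "T \<le> t" "k \<in> Theta n eps phi x0 y0 T" for t k
    using that Theta_eq Theta_iff by blast
  show "nbrs n eps (xs n eps phi x0 y0 t) (ys n eps phi x0 y0 t) k \<noteq> {}"
    if "T \<le> t" "k \<in> {1..n}" "k \<notin> Theta n eps phi x0 y0 T" for t k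
    using that Theta_eq Theta_iff by blast
qed (use assms(1-3) in simp_all)

lemma zst_opinion: "k \<le> n \<Longrightarrow> zst n eps phi x0 y0 t k = xs n eps phi x0 y0 t k"
  unfolding zst_def by simp

lemma zst_action: "n < k \<Longrightarrow> zst n eps phi x0 y0 t k = ys n eps phi x0 y0 (t - 1) (k - n)"
  unfolding zst_def by simp

theorem proposition3:
  fixes n :: nat and eps phi :: real and x0 y0 :: "nat \<Rightarrow> real" and T :: nat
  assumes "n \<ge> 1"
    and "0 \<le> eps" and "eps \<le> 1"
    and "0 < phi" and "phi < 1"
    and "\<forall>i\<in>{1..n}. x0 i \<in> {0..1} \<and> y0 i \<in> {0..1}"
    and "T > 0"
    and "Theta n eps phi x0 y0 T \<noteq> {}"
    and "\<forall>t\<ge>T. Omega n eps phi x0 y0 t = Omega n eps phi x0 y0 T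
               \<and> Theta n eps phi x0 y0 t = Theta n eps phi x0 y0 T"
  shows "(\<forall>i\<in>Theta n eps phi x0 y0 T. \<forall>t\<ge>T. zst n eps phi x0 y0 t i = zst n eps phi x0 y0 T i)
       \<and> (\<forall>j\<in>Omega n eps phi x0 y0 T.
            (\<lambda>t. infdist (zst n eps phi x0 y0 t j)
                   (convex hull ((\<lambda>i. zst n eps phi x0 y0 T i) ` Theta n eps phi x0 y0 T)))
            \<longlonglongrightarrow> 0)"
proof -
  interpret opinion_action_isolated n phi T "xs n eps phi x0 y0" "ys n eps phi x0 y0"
    "\<lambda>t. nbrs n eps (xs n eps phi x0 y0 t) (ys n eps phi x0 y0 t)" "Theta n eps phi x0 y0 T"
    using opinion_action_isolated_model assms(1,4,5,8,9) by blast
  have Theta_opinions: "(\<lambda>i. zst n eps phi x0 y0 T i) ` Theta n eps phi x0 y0 T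
      = xs n eps phi x0 y0 T ` Theta n eps phi x0 y0 T"
    using Th_subset zst_opinion by (intro image_cong) auto
  show ?thesis
    unfolding Theta_opinions
  proof (intro conjI ballI allI impI)
    fix i t assume i: "i \<in> Theta n eps phi x0 y0 T" and t: "T \<le> t"
    then have "i \<le> n"
      using Th_subset by auto
    then show "zst n eps phi x0 y0 t i = zst n eps phi x0 y0 T i"
      using zst_opinion x_isolated_const[OF t i] by simp
  next
    fix j assume "j \<in> Omega n eps phi x0 y0 T"
    then consider "j \<in> {1..n}" | "n < j" "j - n \<in> {1..n}"
      unfolding Omega_def by fastforce
    then show "(\<lambda>t. infdist (zst n eps phi x0 y0 t j)
        (convex hull (xs n eps phi x0 y0 T ` Theta n eps phi x0 y0 T))) \<longlonglongrightarrow> 0"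
    proof cases
      case 1
      then show ?thesis
        using infdist_convex_hull_tendsto(1)[OF 1] zst_opinion by simp
    next
      case 2
      then show ?thesis
        using filterlim_compose[OF infdist_convex_hull_tendsto(2)[OF 2(2)] filterlim_minus_const_nat_at_top]
        by (simp add: zst_action)
    qed
  qed
qed

end
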